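(* The map $D\mapsto D^{\#}=(D^\dagger)^\ddagger$ is an automorphism of $\Psi\mathfrak D$ of order $4$.
   Context: $\Psi\mathfrak D$ is the algebra of all formal series $\sum_{m=-\infty}^{M}\sum_{k=-\infty}^{K}C_{km}x^k(d/dx)^m$ ($C_{km}\in\mathbb C$, $M,K$ depending on the series) with multiplication determined by $(d/dx)^m x^k=\sum_{j\ge0}\frac{(m)_j(k)_j}{j!}x^{k-j}(d/dx)^{m-j}$, $(a)_j=a(a-1)\cdots(a-j+1)$. The involutive antiautomorphisms $\dagger$ and $\ddagger$ are given by $\bigl(\sum C_{km}x^k(d/dx)^m\bigr)^\dagger=\sum C_{km}(-d/dx)^mx^k$ and $\bigl(\sum C_{km}x^k(d/dx)^m\bigr)^\ddagger=\sum C_{km}x^m(d/dx)^k$. *)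

theory Defs
  imports Complex_Main
begin

text \<open>An element of the algebra PsiD of formal pseudo-differential series
  sum_{m<=M} sum_{k<=K} C k m x^k (d/dx)^m is represented by its coefficient
  function C :: int => int => complex (C k m is the coefficient of x^k (d/dx)^m).\<close>

type_synonym psi = "int \<Rightarrow> int \<Rightarrow> complex"

definition PsiD :: "psi set" where
  "PsiD = {C. \<exists>K M. \<forall>k m. (k > K \<or> m > M) \<longrightarrow> C k m = 0}"

definition ffact_int :: "int \<Rightarrow> nat \<Rightarrow> complex" where
  "ffact_int a j = (\<Prod>i<j. of_int (a - int i))"

definition psi_zero :: psi where "psi_zero = (\<lambda>k m. 0)"
definition psi_one :: psi where "psi_one = (\<lambda>k m. if k = 0 \<and> m = 0 then 1 else 0)"
definition psi_add :: "psi \<Rightarrow> psi \<Rightarrow> psi" where "psi_add A B = (\<lambda>k m. A k m + B k m)"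
definition psi_smult :: "complex \<Rightarrow> psi \<Rightarrow> psi" where "psi_smult c A = (\<lambda>k m. c * A k m)"

text \<open>Multiplication, bilinear extension of
  (x^a d^b)(x^c d^e) = sum_j (b)_j (c)_j / j! x^(a+c-j) d^(b+e-j).
  The coefficient of x^k d^m collects the terms with c = k+j-a, e = m+j-b;
  for elements of PsiD only finitely many triples (a,b,j) contribute.\<close>
definition psi_mult :: "psi \<Rightarrow> psi \<Rightarrow> psi" where
  "psi_mult A B = (\<lambda>k m. \<Sum>(a,b,j) \<in> {(a,b,j). A a b \<noteq> 0 \<and> B (k + int j - a) (m + int j - b) \<noteq> 0}.
      A a b * B (k + int j - a) (m + int j - b) * ffact_int b j * ffact_int (k + int j - a) j / fact j)"

text \<open>dagger: sum C x^k d^m |-> sum C (-d)^m x^k, with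
  (-d)^m x^k = (-1)^m sum_j (m)_j (k)_j / j! x^(k-j) d^(m-j).\<close>
definition psi_dagger :: "psi \<Rightarrow> psi" where
  "psi_dagger C = (\<lambda>k m. \<Sum>j \<in> {j::nat. C (k + int j) (m + int j) \<noteq> 0}.
      C (k + int j) (m + int j) * (if even (m + int j) then 1 else -1)
      * ffact_int (m + int j) j * ffact_int (k + int j) j / fact j)"

definition psi_ddagger :: "psi \<Rightarrow> psi" where
  "psi_ddagger C = (\<lambda>k m. C m k)"

definition psi_sharp :: "psi \<Rightarrow> psi" where
  "psi_sharp D = psi_ddagger (psi_dagger D)"

end

theory Submission
  imports Defs "HOL-Computational_Algebra.Formal_Power_Series" "HOL-Library.Groups_Big_Fun"
begin

text \<open>Writing out the coefficients,
  \<open>D#(k,m) = sum_j (-1)^(k+j) (k+j)_j (m+j)_j / j! * D(m+j,k+j)\<close>, a finite sum for \<open>D\<close> in PsiD,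
  so \<open>#\<close> is linear. Multiplicativity reduces, coefficient by coefficient, to products of two
  monomials \<open>x^a d^b\<close> and \<open>x^c d^e\<close>, where it becomes an identity between falling factorials.
  Both of its sides expand in the products \<open>(a)_s (c)_(n-s) (e)_t (b)_(n-t)\<close>: the left one by
  Chu-Vandermonde and the alternating sum \<open>sum_j (-1)^j C(n,j) C(n-j,s) C(n-j,t) = C(n,s) C(s,n-t)\<close>,
  the right one by \<open>(z)_p (z-p)_j = (z)_(p+j)\<close>. Applying \<open>#\<close> twice collapses the sum
  \<open>sum_p (-1)^p C(n,p)\<close> and leaves \<open>D##(k,m) = (-1)^(k+m) D(k,m)\<close>; so \<open>#\<close> has order
  dividing 4, and exactly 4 since \<open>x# = d\<close> and \<open>x## = -x\<close>.\<close>

section \<open>Alternating binomial sums\<close>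

lemma sum_alternating_choose_Suc:
  fixes f :: "nat \<Rightarrow> 'a::comm_ring_1"
  shows "(\<Sum>u\<le>Suc N. (-1)^(Suc N - u) * of_nat (Suc N choose u) * f u)
       = (\<Sum>u\<le>N. (-1)^(N - u) * of_nat (N choose u) * (f (Suc u) - f u))"
proof -
  have "(\<Sum>u\<le>Suc N. (-1)^(Suc N - u) * of_nat (Suc N choose u) * f u)
      = (-1)^(Suc N) * f 0 + (\<Sum>u\<le>N. (-1)^(N - u) * (of_nat (N choose u) + of_nat (N choose Suc u)) * f (Suc u))"
    by (subst sum.atMost_Suc_shift) simp
  also have "\<dots> = (\<Sum>u\<le>N. (-1)^(N - u) * of_nat (N choose u) * f (Suc u))
      + ((-1)^(Suc N) * f 0 + (\<Sum>u\<le>N. (-1)^(N - u) * of_nat (N choose Suc u) * f (Suc u)))"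
    by (simp add: algebra_simps sum.distrib)
  also have "(-1)^(Suc N) * f 0 + (\<Sum>u\<le>N. (-1)^(N - u) * of_nat (N choose Suc u) * f (Suc u))
      = - (\<Sum>u\<le>N. (-1)^(N - u) * of_nat (N choose u) * f u)"
  proof -
    have "(\<Sum>u\<le>Suc N. (-1)^(Suc N - u) * of_nat (N choose u) * f u)
        = (-1)^(Suc N) * f 0 + (\<Sum>u\<le>N. (-1)^(N - u) * of_nat (N choose Suc u) * f (Suc u))"
      by (subst sum.atMost_Suc_shift) simp
    moreover have "(\<Sum>u\<le>Suc N. (-1)^(Suc N - u) * of_nat (N choose u) * f u)
        = - (\<Sum>u\<le>N. (-1)^(N - u) * of_nat (N choose u) * f u)"
      by (simp add: Suc_diff_le sum_negf[symmetric] binomial_eq_0)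
    ultimately show ?thesis by simp
  qed
  finally show ?thesis by (simp add: algebra_simps sum_subtractf)
qed

lemma sum_alternating_choose_shift:
  "(\<Sum>u\<le>N. (-1)^(N - u) * of_nat (N choose u) * of_nat ((s + u) choose t) :: 'a::comm_ring_1)
     = (if N \<le> t then of_nat (s choose (t - N)) else 0)"
proof (induction N arbitrary: t)
  case 0
  show ?case by simp
next
  case (Suc N)
  show ?case
  proof (cases t)
    case 0
    then show ?thesis unfolding sum_alternating_choose_Suc by simp
  next
    case (Suc t')
    then show ?thesis unfolding sum_alternating_choose_Suc using Suc.IH[of t'] by simp
  qed
qed

lemma choose_mult_choose_diff: "(n choose j) * ((n - j) choose s) = (n choose s) * ((n - s) choose j)"
proof (cases "j + s \<le> n")
  case True
  then have "(n choose (n - j)) * ((n - j) choose s) = (n choose s) * ((n - s) choose (n - j - s))"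
    by (intro choose_mult) auto
  moreover have "n choose (n - j) = n choose j" "(n - s) choose (n - j - s) = (n - s) choose j"
    using True binomial_symmetric[of j n] binomial_symmetric[of j "n - s"] by (simp_all add: add.commute)
  ultimately show ?thesis by simp
next
  case False
  then have "n < s \<or> n - s < j" "n < j \<or> n - j < s" by auto
  then show ?thesis by (auto simp: binomial_eq_0)
qed

lemma sum_alternating_choose_choose:
  assumes "s \<le> n" "t \<le> n"
  shows "(\<Sum>j\<le>n. (-1)^j * of_nat (n choose j) * of_nat ((n - j) choose s) * of_nat ((n - j) choose t) :: 'a::comm_ring_1)
       = of_nat (n choose s) * of_nat (s choose (n - t))"
proof -
  define N where "N = n - s"
  have "(\<Sum>j\<le>n. (-1)^j * of_nat (n choose j) * of_nat ((n - j) choose s) * of_nat ((n - j) choose t) :: 'a)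
      = of_nat (n choose s) * (\<Sum>j\<le>n. (-1)^j * of_nat (N choose j) * of_nat ((n - j) choose t))"
    unfolding sum_distrib_left
  proof (rule sum.cong[OF refl])
    fix j
    have "(-1)^j * of_nat (n choose j) * of_nat ((n - j) choose s) * of_nat ((n - j) choose t)
        = (-1)^j * of_nat ((n choose j) * ((n - j) choose s)) * (of_nat ((n - j) choose t) :: 'a)"
      by (simp only: of_nat_mult mult.assoc)
    also have "\<dots> = (-1)^j * of_nat ((n choose s) * (N choose j)) * of_nat ((n - j) choose t)"
      unfolding N_def choose_mult_choose_diff ..
    also have "\<dots> = of_nat (n choose s) * ((-1)^j * of_nat (N choose j) * of_nat ((n - j) choose t))"
      by (simp only: of_nat_mult ac_simps)
    finally show "(-1)^j * of_nat (n choose j) * of_nat ((n - j) choose s) * of_nat ((n - j) choose t)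
        = (of_nat (n choose s) * ((-1)^j * of_nat (N choose j) * of_nat ((n - j) choose t)) :: 'a)" .
  qed
  also have "(\<Sum>j\<le>n. (-1)^j * of_nat (N choose j) * of_nat ((n - j) choose t) :: 'a)
      = (\<Sum>j\<le>N. (-1)^j * of_nat (N choose j) * of_nat ((n - j) choose t))"
    by (rule sum.mono_neutral_right) (auto simp: N_def not_le binomial_eq_0)
  also have "\<dots> = (\<Sum>u\<le>N. (-1)^(N - u) * of_nat (N choose (N - u)) * of_nat ((n - (N - u)) choose t))"
    by (rule sum.reindex_bij_witness[where i="\<lambda>u. N - u" and j="\<lambda>j. N - j"]) auto
  also have "\<dots> = (\<Sum>u\<le>N. (-1)^(N - u) * of_nat (N choose u) * of_nat ((s + u) choose t))"
  proof (rule sum.cong[OF refl])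
    fix u assume "u \<in> {..N}"
    then have "n - (N - u) = s + u" "N choose (N - u) = N choose u"
      using assms binomial_symmetric[of u N] by (auto simp: N_def)
    then show "(-1)^(N - u) * of_nat (N choose (N - u)) * of_nat ((n - (N - u)) choose t)
        = ((-1)^(N - u) * of_nat (N choose u) * of_nat ((s + u) choose t) :: 'a)"
      by simp
  qed
  also have "\<dots> = of_nat (s choose (n - t))"
  proof (cases "N \<le> t")
    case True
    then have "s choose (t - N) = s choose (n - t)"
      using assms binomial_symmetric[of "t - N" s] by (simp add: N_def)
    with True show ?thesis by (simp add: sum_alternating_choose_shift)
  next
    case False
    then have "s < n - t" using assms by (simp add: N_def)
    with False show ?thesis by (simp add: sum_alternating_choose_shift binomial_eq_0)
  qed
  finally show ?thesis .
qed

section \<open>Falling factorials\<close>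

definition ffact :: "'a::comm_ring_1 \<Rightarrow> nat \<Rightarrow> 'a" where
  "ffact z j = (\<Prod>i<j. z - of_nat i)"

lemma ffact_int_eq_ffact: "ffact_int a j = ffact (of_int a) j"
  unfolding ffact_int_def ffact_def by simp

lemma ffact_add: "ffact z (s + t) = ffact z s * ffact (z - of_nat s) t"
  by (induction t) (simp_all add: ffact_def algebra_simps)

lemma ffact_eq_fact_gchoose: "ffact z k = fact k * (z gchoose k)"
  for z :: "'a::field_char_0"
  by (simp add: ffact_def gbinomial_prod_rev atLeast0LessThan)

lemma ffact_Vandermonde:
  fixes x y :: "'a::field_char_0"
  shows "ffact (x + y) n = (\<Sum>k\<le>n. of_nat (n choose k) * ffact x k * ffact y (n - k))"
proof -
  have "ffact (x + y) n = fact n * (\<Sum>k\<le>n. (x gchoose k) * (y gchoose (n - k)))"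
    by (simp add: ffact_eq_fact_gchoose flip: gbinomial_Vandermonde atLeast0AtMost)
  also have "\<dots> = (\<Sum>k\<le>n. of_nat (n choose k) * ffact x k * ffact y (n - k))"
    unfolding sum_distrib_left
    by (intro sum.cong refl) (simp add: ffact_eq_fact_gchoose binomial_fact field_simps)
  finally show ?thesis .
qed

lemma ffact_mult_ffact_shift:
  fixes a c :: "'a::field_char_0"
  assumes "j \<le> n"
  shows "ffact c j * ffact (a + c - of_nat j) (n - j)
       = (\<Sum>s\<le>n. of_nat ((n - j) choose s) * ffact a s * ffact c (n - s))"
proof -
  have "ffact c j * ffact (a + (c - of_nat j)) (n - j)
      = (\<Sum>s\<le>n - j. of_nat ((n - j) choose s) * ffact a s * ffact c (n - s))"
    unfolding ffact_Vandermonde sum_distrib_left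
  proof (rule sum.cong[OF refl])
    fix s assume "s \<in> {..n - j}"
    then have "ffact c j * ffact (c - of_nat j) (n - j - s) = ffact c (n - s)"
      using assms ffact_add[of c j "n - j - s"] by simp
    then show "ffact c j * (of_nat ((n - j) choose s) * ffact a s * ffact (c - of_nat j) (n - j - s))
        = of_nat ((n - j) choose s) * ffact a s * ffact c (n - s)"
      by (simp add: algebra_simps)
  qed
  also have "\<dots> = (\<Sum>s\<le>n. of_nat ((n - j) choose s) * ffact a s * ffact c (n - s))"
    by (rule sum.mono_neutral_left) auto
  finally show ?thesis by (simp add: add_diff_eq)
qed

lemma sum_alternating_choose_choose_fact:
  assumes "s \<le> n" "t \<le> n"
  shows "(\<Sum>j\<le>n. (-1)^j * of_nat ((n - j) choose s) * of_nat ((n - j) choose t) / (fact j * fact (n - j)))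
       = (if n \<le> s + t then 1 / (fact (n - s) * fact (n - t) * fact (s + t - n)) else (0::'a::field_char_0))"
proof -
  have "(\<Sum>j\<le>n. (-1)^j * of_nat ((n - j) choose s) * of_nat ((n - j) choose t) / (fact j * fact (n - j)))
      = (\<Sum>j\<le>n. (-1)^j * of_nat (n choose j) * of_nat ((n - j) choose s) * of_nat ((n - j) choose t)) / (fact n :: 'a)"
    unfolding sum_divide_distrib by (intro sum.cong refl) (simp add: binomial_fact field_simps)
  also have "\<dots> = of_nat (n choose s) * of_nat (s choose (n - t)) / fact n"
    using assms by (simp add: sum_alternating_choose_choose)
  also have "\<dots> = (if n \<le> s + t then 1 / (fact (n - s) * fact (n - t) * fact (s + t - n)) else 0)"
  proof (cases "n \<le> s + t")
    case True
    then have "n - t \<le> s" "s - (n - t) = s + t - n" using assms by auto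
    with True assms show ?thesis by (simp add: binomial_fact field_simps)
  next
    case False
    then show ?thesis by (simp add: binomial_eq_0)
  qed
  finally show ?thesis .
qed

lemma ffact_alternating_summand_expand:
  fixes a b c e :: "'a::field_char_0"
  assumes "j \<le> n"
  shows "(-1)^j * (ffact b j * ffact c j / fact j)
        * (ffact (a + c - of_nat j) (n - j) * ffact (b + e - of_nat j) (n - j) / fact (n - j))
      = (\<Sum>s\<le>n. \<Sum>t\<le>n. (-1)^j * of_nat ((n - j) choose s) * of_nat ((n - j) choose t)
          / (fact j * fact (n - j)) * (ffact a s * ffact c (n - s) * ffact e t * ffact b (n - t)))"
proof -
  have "(-1)^j * (ffact b j * ffact c j / fact j)
        * (ffact (a + c - of_nat j) (n - j) * ffact (b + e - of_nat j) (n - j) / fact (n - j))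
      = (-1)^j / (fact j * fact (n - j)) * ((ffact c j * ffact (a + c - of_nat j) (n - j))
          * (ffact b j * ffact (e + b - of_nat j) (n - j)))"
    by (simp add: field_simps add.commute)
  also have "\<dots> = (-1)^j / (fact j * fact (n - j))
        * ((\<Sum>s\<le>n. of_nat ((n - j) choose s) * ffact a s * ffact c (n - s))
        * (\<Sum>t\<le>n. of_nat ((n - j) choose t) * ffact e t * ffact b (n - t)))"
    by (simp only: ffact_mult_ffact_shift[OF assms])
  also have "\<dots> = (\<Sum>s\<le>n. \<Sum>t\<le>n. (-1)^j / (fact j * fact (n - j))
        * ((of_nat ((n - j) choose s) * ffact a s * ffact c (n - s))
        * (of_nat ((n - j) choose t) * ffact e t * ffact b (n - t))))"
    by (subst sum_product) (simp only: sum_distrib_left)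
  also have "\<dots> = (\<Sum>s\<le>n. \<Sum>t\<le>n. (-1)^j * of_nat ((n - j) choose s) * of_nat ((n - j) choose t)
          / (fact j * fact (n - j)) * (ffact a s * ffact c (n - s) * ffact e t * ffact b (n - t)))"
    by (intro sum.cong refl) (simp add: mult_ac)
  finally show ?thesis .
qed

lemma ffact_alternating_sum_expand:
  fixes a b c e :: "'a::field_char_0"
  shows "(\<Sum>j\<le>n. (-1)^j * (ffact b j * ffact c j / fact j)
            * (ffact (a + c - of_nat j) (n - j) * ffact (b + e - of_nat j) (n - j) / fact (n - j)))
       = (\<Sum>(s, t) \<in> {(s, t). s \<le> n \<and> t \<le> n \<and> n \<le> s + t}.
            ffact a s * ffact c (n - s) * ffact e t * ffact b (n - t)
            / (fact (n - s) * fact (n - t) * fact (s + t - n)))"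
    (is "?lhs = (\<Sum>(s, t) \<in> ?S. ?target s t)")
proof -
  define X where "X s t = ffact a s * ffact c (n - s) * ffact e t * ffact b (n - t)" for s t
  define w where "w j s t = (-1)^j * of_nat ((n - j) choose s) * of_nat ((n - j) choose t)
    / (fact j * fact (n - j) :: 'a)" for j s t
  have "?lhs = (\<Sum>j\<le>n. \<Sum>s\<le>n. \<Sum>t\<le>n. w j s t * X s t)"
    unfolding w_def X_def by (rule sum.cong[OF refl], rule ffact_alternating_summand_expand) simp
  also have "\<dots> = (\<Sum>s\<le>n. \<Sum>j\<le>n. \<Sum>t\<le>n. w j s t * X s t)"
    by (rule sum.swap)
  also have "\<dots> = (\<Sum>s\<le>n. \<Sum>t\<le>n. (\<Sum>j\<le>n. w j s t) * X s t)"
    unfolding sum_distrib_right by (rule sum.cong[OF refl], rule sum.swap)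
  also have "\<dots> = (\<Sum>s\<le>n. \<Sum>t\<le>n. if n \<le> s + t then ?target s t else 0)"
  proof (intro sum.cong refl)
    fix s t assume "s \<in> {..n}" "t \<in> {..n}"
    then have "(\<Sum>j\<le>n. w j s t)
        = (if n \<le> s + t then 1 / (fact (n - s) * fact (n - t) * fact (s + t - n)) else 0)"
      unfolding w_def by (intro sum_alternating_choose_choose_fact) auto
    then show "(\<Sum>j\<le>n. w j s t) * X s t = (if n \<le> s + t then ?target s t else 0)"
      by (simp add: X_def)
  qed
  also have "\<dots> = (\<Sum>(s, t) \<in> {..n} \<times> {..n}. if n \<le> s + t then ?target s t else 0)"
    by (simp add: sum.cartesian_product)
  also have "\<dots> = (\<Sum>(s, t) \<in> ?S. ?target s t)"
    by (rule sum.mono_neutral_cong_right) (auto split: if_splits)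
  finally show ?thesis .
qed

lemma ffact_triple_sum_expand:
  fixes a b c e :: "'a::field_char_0"
  shows "(\<Sum>(j, p) \<in> {(j, p). j + p \<le> n}. (ffact a p * ffact b p / fact p)
            * (ffact c (n - j - p) * ffact e (n - j - p) / fact (n - j - p))
            * (ffact (a - of_nat p) j * ffact (e - of_nat (n - j - p)) j / fact j))
       = (\<Sum>(s, t) \<in> {(s, t). s \<le> n \<and> t \<le> n \<and> n \<le> s + t}.
            ffact a s * ffact c (n - s) * ffact e t * ffact b (n - t)
            / (fact (n - s) * fact (n - t) * fact (s + t - n)))"
proof (rule sum.reindex_bij_witness[where i="\<lambda>(s, t). (s + t - n, n - t)" and j="\<lambda>(j, p). (p + j, n - p)"])
  fix x assume "x \<in> {(j, p). j + p \<le> n}"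
  then obtain j p where x: "x = (j, p)" and jp: "j + p \<le> n" by auto
  have "ffact a p * ffact (a - of_nat p) j = ffact a (p + j)"
    by (simp add: ffact_add)
  moreover have "ffact e (n - j - p) * ffact (e - of_nat (n - j - p)) j = ffact e (n - p)"
    using jp ffact_add[of e "n - j - p" j] by (simp add: algebra_simps)
  moreover have "n - (p + j) = n - j - p" "n - (n - p) = p" "p + j + (n - p) - n = j"
    using jp by auto
  ultimately show "(case case x of (j, p) \<Rightarrow> (p + j, n - p) of (s, t) \<Rightarrow>
        ffact a s * ffact c (n - s) * ffact e t * ffact b (n - t)
        / (fact (n - s) * fact (n - t) * fact (s + t - n)))
      = (case x of (j, p) \<Rightarrow> (ffact a p * ffact b p / fact p)
        * (ffact c (n - j - p) * ffact e (n - j - p) / fact (n - j - p))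
        * (ffact (a - of_nat p) j * ffact (e - of_nat (n - j - p)) j / fact j))"
    unfolding x by (simp add: field_simps)
qed auto

lemma ffact_reordering_identity:
  fixes a b c e :: "'a::field_char_0"
  shows "(\<Sum>j\<le>n. (-1)^j * (ffact b j * ffact c j / fact j)
            * (ffact (a + c - of_nat j) (n - j) * ffact (b + e - of_nat j) (n - j) / fact (n - j)))
       = (\<Sum>(j, p) \<in> {(j, p). j + p \<le> n}. (ffact a p * ffact b p / fact p)
            * (ffact c (n - j - p) * ffact e (n - j - p) / fact (n - j - p))
            * (ffact (a - of_nat p) j * ffact (e - of_nat (n - j - p)) j / fact j))"
  unfolding ffact_alternating_sum_expand ffact_triple_sum_expand ..

section \<open>Weights of monomials\<close>

definition neg_one_pow :: "int \<Rightarrow> complex" where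
  "neg_one_pow t = (if even t then 1 else -1)"

lemma neg_one_pow_add: "neg_one_pow (s + t) = neg_one_pow s * neg_one_pow t"
  by (auto simp: neg_one_pow_def)

lemma neg_one_pow_diff_of_nat: "neg_one_pow (t - int j) = neg_one_pow t * (-1)^j"
  by (auto simp: neg_one_pow_def even_diff)

lemma neg_one_pow_mult_self: "neg_one_pow t * neg_one_pow t = 1"
  by (simp add: neg_one_pow_def)

lemma ffact_int_split:
  assumes "p \<le> n"
  shows "ffact_int z n = ffact_int z p * ffact_int (z - int p) (n - p)"
  using assms ffact_add[of "of_int z :: complex" p "n - p"] by (simp add: ffact_int_eq_ffact)

lemma ffact_int_zero: "0 < j \<Longrightarrow> ffact_int 0 j = 0"
  unfolding ffact_int_def by (rule prod_zero) auto

text \<open>\<open>mult_weight b c j\<close> is the coefficient of \<open>x^(c-j) d^(b-j)\<close> in \<open>d^b x^c\<close>, and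
  \<open>dagger_weight k m j\<close> that of \<open>x^(k-j) d^(m-j)\<close> in \<open>(-d)^m x^k\<close>, the dagger of \<open>x^k d^m\<close>.
  Writing \<open>#\<close> for the sharp map, \<open>sharp_of_product_weight a b c e n\<close> and
  \<open>product_of_sharps_weight a b c e n\<close> are the coefficients of \<open>x^(b+e-n) d^(a+c-n)\<close> in
  \<open>(x^a d^b x^c d^e)#\<close> and in \<open>(x^a d^b)# (x^c d^e)#\<close>.\<close>

definition mult_weight :: "int \<Rightarrow> int \<Rightarrow> nat \<Rightarrow> complex" where
  "mult_weight b c j = ffact_int b j * ffact_int c j / fact j"

definition dagger_weight :: "int \<Rightarrow> int \<Rightarrow> nat \<Rightarrow> complex" where
  "dagger_weight k m j = neg_one_pow m * ffact_int k j * ffact_int m j / fact j"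

definition sharp_of_product_weight :: "int \<Rightarrow> int \<Rightarrow> int \<Rightarrow> int \<Rightarrow> nat \<Rightarrow> complex" where
  "sharp_of_product_weight a b c e n =
    (\<Sum>j\<le>n. mult_weight b c j * dagger_weight (a + c - int j) (b + e - int j) (n - j))"

definition product_of_sharps_weight :: "int \<Rightarrow> int \<Rightarrow> int \<Rightarrow> int \<Rightarrow> nat \<Rightarrow> complex" where
  "product_of_sharps_weight a b c e n = (\<Sum>(j, p) \<in> {(j, p). j + p \<le> n}.
    dagger_weight a b p * dagger_weight c e (n - j - p) * mult_weight (a - int p) (e - int (n - j - p)) j)"

lemma sharp_of_product_weight_eq: "sharp_of_product_weight a b c e n = product_of_sharps_weight a b c e n"
proof -
  let ?a = "of_int a :: complex" and ?b = "of_int b :: complex"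
  and ?c = "of_int c :: complex" and ?e = "of_int e :: complex"
  have "(\<Sum>j\<le>n. mult_weight b c j * dagger_weight (a + c - int j) (b + e - int j) (n - j))
      = neg_one_pow b * neg_one_pow e * (\<Sum>j\<le>n. (-1)^j * (ffact ?b j * ffact ?c j / fact j)
          * (ffact (?a + ?c - of_nat j) (n - j) * ffact (?b + ?e - of_nat j) (n - j) / fact (n - j)))"
    unfolding sum_distrib_left
    by (intro sum.cong refl)
      (simp add: mult_weight_def dagger_weight_def ffact_int_eq_ffact neg_one_pow_add neg_one_pow_diff_of_nat)
  also have "\<dots> = neg_one_pow b * neg_one_pow e * (\<Sum>(j, p) \<in> {(j, p). j + p \<le> n}.
        (ffact ?a p * ffact ?b p / fact p)
      * (ffact ?c (n - j - p) * ffact ?e (n - j - p) / fact (n - j - p))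
      * (ffact (?a - of_nat p) j * ffact (?e - of_nat (n - j - p)) j / fact j))"
    by (simp only: ffact_reordering_identity)
  also have "\<dots> = (\<Sum>(j, p) \<in> {(j, p). j + p \<le> n}.
      dagger_weight a b p * dagger_weight c e (n - j - p) * mult_weight (a - int p) (e - int (n - j - p)) j)"
    unfolding sum_distrib_left
    by (intro sum.cong refl) (auto simp: mult_weight_def dagger_weight_def ffact_int_eq_ffact)
  finally show ?thesis
    unfolding sharp_of_product_weight_def product_of_sharps_weight_def .
qed

lemma dagger_weight_involution:
  "(\<Sum>p\<le>n. dagger_weight k m p * dagger_weight (m - int p) (k - int p) (n - p))
 = (if n = 0 then neg_one_pow (k + m) else 0)"
proof -
  have "(\<Sum>p\<le>n. dagger_weight k m p * dagger_weight (m - int p) (k - int p) (n - p))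
      = (\<Sum>p\<le>n. neg_one_pow (k + m) * ffact_int k n * ffact_int m n / fact n
          * ((-1)^p * of_nat (n choose p)))"
  proof (rule sum.cong[OF refl])
    fix p assume "p \<in> {..n}"
    then have p: "p \<le> n" by simp
    show "dagger_weight k m p * dagger_weight (m - int p) (k - int p) (n - p)
        = neg_one_pow (k + m) * ffact_int k n * ffact_int m n / fact n * ((-1)^p * of_nat (n choose p))"
      unfolding dagger_weight_def ffact_int_split[OF p, of k] ffact_int_split[OF p, of m]
        binomial_fact[OF p] neg_one_pow_diff_of_nat neg_one_pow_add
      by (simp add: field_simps)
  qed
  also have "\<dots> = (if n = 0 then neg_one_pow (k + m) else 0)"
    unfolding sum_distrib_left[symmetric] by (simp add: choose_alternating_sum ffact_int_def)
  finally show ?thesis .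
qed

section \<open>Finitely supported sums\<close>

lemma Sum_any_reindex_inj:
  assumes "inj \<phi>" and "\<And>y. g y \<noteq> 0 \<Longrightarrow> y \<in> range \<phi>"
  shows "Sum_any (g \<circ> \<phi>) = (Sum_any g :: 'a::comm_monoid_add)"
proof -
  have support: "{y. g y \<noteq> 0} = \<phi> ` {x. (g \<circ> \<phi>) x \<noteq> 0}"
    using assms(2) by auto
  have "Sum_any g = sum g (\<phi> ` {x. (g \<circ> \<phi>) x \<noteq> 0})"
    unfolding Sum_any.expand_set support ..
  also have "\<dots> = Sum_any (g \<circ> \<phi>)"
    unfolding Sum_any.expand_set using assms(1) by (simp add: sum.reindex inj_on_subset)
  finally show ?thesis ..
qed

lemma Sum_any_nested_eq_pair:
  assumes "finite {(x, y). g x y \<noteq> 0}"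
  shows "Sum_any (\<lambda>x. Sum_any (g x)) = Sum_any (\<lambda>(x, y). g x y :: 'a::comm_monoid_add)"
proof (rule Sum_any.cartesian_product)
  let ?S = "{(x, y). g x y \<noteq> 0}"
  show "finite (fst ` ?S \<times> snd ` ?S)"
    using assms by simp
  show "{x. \<exists>y. g x y \<noteq> 0} \<times> {y. \<exists>x. g x y \<noteq> 0} \<subseteq> fst ` ?S \<times> snd ` ?S"
    by (auto simp: image_iff)
qed

lemma Sum_any_nested_reindex:
  fixes G :: "'a \<Rightarrow> 'b \<Rightarrow> 'z::comm_monoid_add" and H :: "'c \<Rightarrow> 'd \<Rightarrow> 'z"
  assumes fin: "finite {(u, v). H u v \<noteq> 0}"
    and inj: "inj \<phi>"
    and eq: "\<And>x y. case_prod H (\<phi> (x, y)) = G x y"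
    and range: "\<And>u v. H u v \<noteq> 0 \<Longrightarrow> (u, v) \<in> range \<phi>"
  shows "Sum_any (\<lambda>x. Sum_any (G x)) = Sum_any (\<lambda>u. Sum_any (H u))"
proof -
  have "{(x, y). G x y \<noteq> 0} = \<phi> -` {(u, v). H u v \<noteq> 0}"
    using eq by (auto simp flip: eq split: prod.splits)
  then have finG: "finite {(x, y). G x y \<noteq> 0}"
    using finite_vimageI[OF fin inj] by simp
  have "Sum_any (\<lambda>x. Sum_any (G x)) = Sum_any (case_prod H \<circ> \<phi>)"
    unfolding Sum_any_nested_eq_pair[OF finG] by (rule Sum_any.cong) (auto simp: eq)
  also have "\<dots> = Sum_any (\<lambda>u. Sum_any (H u))"
    unfolding Sum_any_nested_eq_pair[OF fin] using inj range
    by (intro Sum_any_reindex_inj) auto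
  finally show ?thesis .
qed

lemma Sum_any_nested_reindex_sum:
  fixes G :: "'a \<Rightarrow> 'b \<Rightarrow> 'z::comm_monoid_add" and F :: "'c \<Rightarrow> 'd \<Rightarrow> 'z"
  assumes fin: "finite {u. \<exists>v\<in>T u. F u v \<noteq> 0}" and fin_T: "\<And>u. finite (T u)"
    and inj: "inj \<phi>" and into: "\<And>x y. \<phi> (x, y) \<in> Sigma UNIV T"
    and onto: "\<And>u v. v \<in> T u \<Longrightarrow> (u, v) \<in> range \<phi>"
    and eq: "\<And>x y. case_prod F (\<phi> (x, y)) = G x y"
  shows "Sum_any (\<lambda>x. Sum_any (G x)) = Sum_any (\<lambda>u. sum (F u) (T u))"
proof -
  define H where "H u v = (if v \<in> T u then F u v else 0)" for u v
  have "Sum_any (\<lambda>x. Sum_any (G x)) = Sum_any (\<lambda>u. Sum_any (H u))"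
  proof (rule Sum_any_nested_reindex[OF _ inj])
    show "finite {(u, v). H u v \<noteq> 0}"
      by (rule finite_subset[OF _ finite_SigmaI[OF fin fin_T]]) (auto simp: H_def split: if_splits)
    show "case_prod H (\<phi> (x, y)) = G x y" for x y
      using into[of x y] eq[of x y] by (auto simp: H_def split: prod.splits)
    show "(u, v) \<in> range \<phi>" if "H u v \<noteq> 0" for u v
      using that onto by (auto simp: H_def split: if_splits)
  qed
  also have "\<dots> = Sum_any (\<lambda>u. sum (F u) (T u))"
    by (simp add: H_def Sum_any.conditionalize[OF fin_T])
  finally show ?thesis .
qed

lemma Sum_any_mult_Sum_any_mult:
  fixes f g :: "'b \<Rightarrow> 'a::semiring_0"
  assumes f: "finite {x. f x \<noteq> 0}" and g: "finite {y. g y \<noteq> 0}"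
  shows "Sum_any f * Sum_any g * r = Sum_any (\<lambda>(x, y). f x * g y * r)"
proof -
  have gr: "finite {y. g y * r \<noteq> 0}"
    by (rule finite_subset[OF _ g]) auto
  have "Sum_any f * Sum_any g * r = Sum_any f * Sum_any (\<lambda>y. g y * r)"
    by (simp add: Sum_any_left_distrib[OF g] mult.assoc)
  also have "\<dots> = Sum_any (\<lambda>x. Sum_any (\<lambda>y. f x * g y * r))"
    by (simp add: Sum_any_product[OF f gr] mult.assoc)
  also have "\<dots> = Sum_any (\<lambda>(x, y). f x * g y * r)"
    by (rule Sum_any_nested_eq_pair, rule finite_subset[of _ "{x. f x \<noteq> 0} \<times> {y. g y \<noteq> 0}"])
      (use f g in auto)
  finally show ?thesis .
qed

section \<open>Coefficient formulas in PsiD\<close>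

lemma PsiD_boundedE:
  assumes "C \<in> PsiD"
  obtains K M where "\<And>k m. C k m \<noteq> 0 \<Longrightarrow> k \<le> K \<and> m \<le> M"
  using assms unfolding PsiD_def by (auto simp: not_le[symmetric])

lemma PsiD_boundedI:
  assumes "\<And>k m. C k m \<noteq> 0 \<Longrightarrow> k \<le> K \<and> m \<le> M"
  shows "C \<in> PsiD"
  unfolding PsiD_def
proof (intro CollectI exI allI impI)
  fix k m assume "K < k \<or> M < m"
  then show "C k m = 0" using assms[of k m] by force
qed

lemma finite_nat_le_int: "finite {i::nat. int i \<le> z}"
  by (rule finite_subset[of _ "{..nat z}"]) auto

lemma finite_diagonal_support:
  assumes "C \<in> PsiD"
  shows "finite {j::nat. C (k + int j) (m + int j) \<noteq> 0}"
proof -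
  obtain K M where "\<And>k m. C k m \<noteq> 0 \<Longrightarrow> k \<le> K \<and> m \<le> M"
    using PsiD_boundedE[OF assms] by blast
  then show ?thesis
    by (intro finite_subset[OF _ finite_nat_le_int[of "K - k"]]) force
qed

lemma finite_product_support:
  assumes "A \<in> PsiD" "B \<in> PsiD"
  shows "finite {(a, b, j::nat). A a b \<noteq> 0 \<and> B (k + int j - a) (m + int j - b) \<noteq> 0}"
proof -
  obtain K1 M1 where A: "\<And>k m. A k m \<noteq> 0 \<Longrightarrow> k \<le> K1 \<and> m \<le> M1"
    using PsiD_boundedE[OF assms(1)] by blast
  obtain K2 M2 where B: "\<And>k m. B k m \<noteq> 0 \<Longrightarrow> k \<le> K2 \<and> m \<le> M2"
    using PsiD_boundedE[OF assms(2)] by blast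
  show ?thesis
  proof (rule finite_subset)
    show "finite ({k - K2..K1} \<times> {m - M2..M1} \<times> {j. int j \<le> K1 + K2 - k})"
      using finite_nat_le_int by blast
    show "{(a, b, j). A a b \<noteq> 0 \<and> B (k + int j - a) (m + int j - b) \<noteq> 0}
        \<subseteq> {k - K2..K1} \<times> {m - M2..M1} \<times> {j. int j \<le> K1 + K2 - k}"
      using A B by fastforce
  qed
qed

lemma psi_dagger_Sum_any:
  assumes "C \<in> PsiD"
  shows "psi_dagger C k m = Sum_any (\<lambda>j. C (k + int j) (m + int j) * dagger_weight (k + int j) (m + int j) j)"
proof -
  have "Sum_any (\<lambda>j. C (k + int j) (m + int j) * dagger_weight (k + int j) (m + int j) j)
      = (\<Sum>j \<in> {j. C (k + int j) (m + int j) \<noteq> 0}.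
          C (k + int j) (m + int j) * dagger_weight (k + int j) (m + int j) j)"
    by (rule Sum_any.expand_superset[OF finite_diagonal_support[OF assms]]) auto
  then show ?thesis
    unfolding psi_dagger_def
    by (simp add: dagger_weight_def neg_one_pow_def mult_ac)
qed

lemma psi_sharp_apply: "psi_sharp C k m = psi_dagger C m k"
  by (simp add: psi_sharp_def psi_ddagger_def)

lemma psi_sharp_Sum_any:
  assumes "C \<in> PsiD"
  shows "psi_sharp C k m = Sum_any (\<lambda>j. C (m + int j) (k + int j) * dagger_weight (m + int j) (k + int j) j)"
  using assms by (simp add: psi_sharp_apply psi_dagger_Sum_any)

lemma psi_mult_Sum_any:
  assumes "A \<in> PsiD" "B \<in> PsiD"
  shows "psi_mult A B k m = Sum_any (\<lambda>(a, b, j).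
    A a b * B (k + int j - a) (m + int j - b) * mult_weight b (k + int j - a) j)"
  unfolding psi_mult_def
  by (subst Sum_any.expand_superset[OF finite_product_support[OF assms]])
    (auto simp: mult_weight_def mult_ac intro!: sum.cong)

lemma psi_add_closed:
  assumes "A \<in> PsiD" "B \<in> PsiD"
  shows "psi_add A B \<in> PsiD"
proof -
  obtain K1 M1 where A: "\<And>k m. A k m \<noteq> 0 \<Longrightarrow> k \<le> K1 \<and> m \<le> M1"
    using PsiD_boundedE[OF assms(1)] by blast
  obtain K2 M2 where B: "\<And>k m. B k m \<noteq> 0 \<Longrightarrow> k \<le> K2 \<and> m \<le> M2"
    using PsiD_boundedE[OF assms(2)] by blast
  show ?thesis
  proof (rule PsiD_boundedI[of _ "max K1 K2" "max M1 M2"])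
    fix k m assume "psi_add A B k m \<noteq> 0"
    then have "A k m \<noteq> 0 \<or> B k m \<noteq> 0" by (auto simp: psi_add_def)
    then show "k \<le> max K1 K2 \<and> m \<le> max M1 M2" using A B by fastforce
  qed
qed

lemma psi_smult_closed: "A \<in> PsiD \<Longrightarrow> psi_smult c A \<in> PsiD"
  unfolding PsiD_def psi_smult_def by auto

lemma psi_one_in_PsiD: "psi_one \<in> PsiD"
  by (rule PsiD_boundedI[of _ 0 0]) (simp add: psi_one_def split: if_splits)

lemma psi_mult_closed:
  assumes "A \<in> PsiD" "B \<in> PsiD"
  shows "psi_mult A B \<in> PsiD"
proof -
  obtain K1 M1 where A: "\<And>k m. A k m \<noteq> 0 \<Longrightarrow> k \<le> K1 \<and> m \<le> M1"
    using PsiD_boundedE[OF assms(1)] by blast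
  obtain K2 M2 where B: "\<And>k m. B k m \<noteq> 0 \<Longrightarrow> k \<le> K2 \<and> m \<le> M2"
    using PsiD_boundedE[OF assms(2)] by blast
  show ?thesis
  proof (rule PsiD_boundedI[of _ "K1 + K2" "M1 + M2"])
    fix k m assume "psi_mult A B k m \<noteq> 0"
    then obtain a b j where "A a b \<noteq> 0" "B (k + int j - a) (m + int j - b) \<noteq> 0"
      unfolding psi_mult_def by (auto elim: sum.not_neutral_contains_not_neutral)
    with A B show "k \<le> K1 + K2 \<and> m \<le> M1 + M2" by fastforce
  qed
qed

lemma psi_sharp_closed:
  assumes "C \<in> PsiD"
  shows "psi_sharp C \<in> PsiD"
proof -
  obtain K M where C: "\<And>k m. C k m \<noteq> 0 \<Longrightarrow> k \<le> K \<and> m \<le> M"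
    using PsiD_boundedE[OF assms] by blast
  show ?thesis
  proof (rule PsiD_boundedI[of _ M K])
    fix k m assume "psi_sharp C k m \<noteq> 0"
    then obtain j where "C (m + int j) (k + int j) \<noteq> 0"
      unfolding psi_sharp_apply psi_dagger_def by (auto elim: sum.not_neutral_contains_not_neutral)
    with C show "k \<le> M \<and> m \<le> K" by fastforce
  qed
qed

section \<open>The sharp map\<close>

lemma psi_sharp_add:
  assumes "A \<in> PsiD" "B \<in> PsiD"
  shows "psi_sharp (psi_add A B) = psi_add (psi_sharp A) (psi_sharp B)"
proof (intro ext)
  fix k m
  let ?w = "\<lambda>j. dagger_weight (m + int j) (k + int j) j"
  have "psi_sharp (psi_add A B) k m
      = Sum_any (\<lambda>j. A (m + int j) (k + int j) * ?w j + B (m + int j) (k + int j) * ?w j)"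
    unfolding psi_sharp_Sum_any[OF psi_add_closed[OF assms]] by (simp add: psi_add_def algebra_simps)
  also have "\<dots> = psi_add (psi_sharp A) (psi_sharp B) k m"
    unfolding psi_add_def psi_sharp_Sum_any[OF assms(1)] psi_sharp_Sum_any[OF assms(2)]
    by (intro Sum_any.distrib finite_subset[OF _ finite_diagonal_support[OF assms(1)]]
        finite_subset[OF _ finite_diagonal_support[OF assms(2)]]) auto
  finally show "psi_sharp (psi_add A B) k m = psi_add (psi_sharp A) (psi_sharp B) k m" .
qed

lemma psi_sharp_smult:
  assumes "A \<in> PsiD"
  shows "psi_sharp (psi_smult c A) = psi_smult c (psi_sharp A)"
proof (intro ext)
  fix k m
  let ?g = "\<lambda>j. A (m + int j) (k + int j) * dagger_weight (m + int j) (k + int j) j"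
  have fin: "finite {j. ?g j \<noteq> 0}"
    by (rule finite_subset[OF _ finite_diagonal_support[OF assms]]) auto
  have "psi_sharp (psi_smult c A) k m = Sum_any (\<lambda>j. c * ?g j)"
    unfolding psi_sharp_Sum_any[OF psi_smult_closed[OF assms]] by (simp add: psi_smult_def mult.assoc)
  also have "\<dots> = c * psi_sharp A k m"
    unfolding psi_sharp_Sum_any[OF assms] by (rule Sum_any_right_distrib[OF fin, symmetric])
  finally show "psi_sharp (psi_smult c A) k m = psi_smult c (psi_sharp A) k m"
    by (simp add: psi_smult_def)
qed

lemma psi_sharp_one: "psi_sharp psi_one = psi_one"
proof (intro ext)
  fix k m
  have "psi_one (m + int j) (k + int j) * dagger_weight (m + int j) (k + int j) j
      = (if j = 0 then psi_one k m else 0)" for j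
  proof (cases "j = 0")
    case True
    then show ?thesis by (simp add: psi_one_def dagger_weight_def neg_one_pow_def ffact_int_def)
  next
    case False
    then show ?thesis
      by (cases "m + int j = 0") (simp_all add: psi_one_def dagger_weight_def ffact_int_zero)
  qed
  then show "psi_sharp psi_one k m = psi_one k m"
    by (simp add: psi_sharp_Sum_any[OF psi_one_in_PsiD])
qed

lemma psi_sharp_mult_Sum_any:
  assumes A: "A \<in> PsiD" and B: "B \<in> PsiD"
  shows "psi_sharp (psi_mult A B) k m = Sum_any (\<lambda>(a, b, n).
    A a b * B (m + int n - a) (k + int n - b) * sharp_of_product_weight a b (m + int n - a) (k + int n - b) n)"
proof -
  define F where "F = (\<lambda>(a, b, n) j. A a b * B (m + int n - a) (k + int n - b)
    * (mult_weight b (m + int n - a) j * dagger_weight (m + int n - int j) (k + int n - int j) (n - j)))"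
  have "psi_sharp (psi_mult A B) k m
      = Sum_any (\<lambda>i. psi_mult A B (m + int i) (k + int i) * dagger_weight (m + int i) (k + int i) i)"
    by (rule psi_sharp_Sum_any[OF psi_mult_closed[OF A B]])
  also have "\<dots> = Sum_any (\<lambda>i. Sum_any (\<lambda>(a, b, j). A a b * B (m + int i + int j - a) (k + int i + int j - b)
      * mult_weight b (m + int i + int j - a) j * dagger_weight (m + int i) (k + int i) i))"
    unfolding psi_mult_Sum_any[OF A B]
    by (intro Sum_any.cong, subst Sum_any_left_distrib)
      (auto intro: finite_subset[OF _ finite_product_support[OF A B]] simp: case_prod_beta)
  also have "\<dots> = Sum_any (\<lambda>u. sum (F u) (case u of (a, b, n) \<Rightarrow> {..n}))"
  proof (rule Sum_any_nested_reindex_sum[where \<phi>="\<lambda>(i, a, b, j). ((a, b, i + j), j)"])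
    show "finite {u. \<exists>v \<in> (case u of (a, b, n) \<Rightarrow> {..n}). F u v \<noteq> 0}"
      by (rule finite_subset[OF _ finite_product_support[OF A B, of m k]]) (auto simp: F_def)
    show "inj (\<lambda>(i, a, b, j). ((a::int, b::int, i + j), j::nat))"
      by (rule injI) auto
    show "(u, v) \<in> range (\<lambda>(i, a, b, j). ((a, b, i + j), j))"
      if "v \<in> (case u of (a, b, n) \<Rightarrow> {..n})" for u :: "int \<times> int \<times> nat" and v
    proof -
      obtain a b n where "u = (a, b, n)" by (cases u)
      with that show ?thesis by (auto intro!: image_eqI[where x="(n - v, a, b, v)"])
    qed
  qed (auto simp: F_def algebra_simps)
  also have "\<dots> = Sum_any (\<lambda>(a, b, n).
      A a b * B (m + int n - a) (k + int n - b) * sharp_of_product_weight a b (m + int n - a) (k + int n - b) n)"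
    by (simp add: F_def sharp_of_product_weight_def sum_distrib_left case_prod_beta)
  finally show ?thesis .
qed

lemma finite_pairs_sum_le: "finite {(j, p). j + p \<le> (n::nat)}"
  by (rule finite_subset[of _ "{..n} \<times> {..n}"]) auto

lemma psi_sharp_mult_psi_sharp:
  assumes A: "A \<in> PsiD" and B: "B \<in> PsiD"
  shows "psi_sharp A a b * psi_sharp B c e * w = Sum_any (\<lambda>(p, q).
    A (b + int p) (a + int p) * dagger_weight (b + int p) (a + int p) p
    * (B (e + int q) (c + int q) * dagger_weight (e + int q) (c + int q) q) * w)"
  unfolding psi_sharp_Sum_any[OF A] psi_sharp_Sum_any[OF B]
  by (rule Sum_any_mult_Sum_any_mult)
    (auto intro: finite_subset[OF _ finite_diagonal_support[OF A]] finite_subset[OF _ finite_diagonal_support[OF B]])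

lemma psi_mult_sharp_sharp_Sum_any:
  assumes A: "A \<in> PsiD" and B: "B \<in> PsiD"
  shows "psi_mult (psi_sharp A) (psi_sharp B) k m = Sum_any (\<lambda>(a, b, n).
    A a b * B (m + int n - a) (k + int n - b) * product_of_sharps_weight a b (m + int n - a) (k + int n - b) n)"
proof -
  define G where "G = (\<lambda>(a', b', j) (p, q).
      A (b' + int p) (a' + int p) * dagger_weight (b' + int p) (a' + int p) p
    * (B (m + int j - b' + int q) (k + int j - a' + int q)
        * dagger_weight (m + int j - b' + int q) (k + int j - a' + int q) q)
    * mult_weight b' (k + int j - a') j)"
  define F where "F = (\<lambda>(a, b, n) (j, p). A a b * B (m + int n - a) (k + int n - b)
    * (dagger_weight a b p * dagger_weight (m + int n - a) (k + int n - b) (n - j - p)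
        * mult_weight (a - int p) (k + int n - b - int (n - j - p)) j))"
  have "psi_mult (psi_sharp A) (psi_sharp B) k m = Sum_any (\<lambda>(a', b', j).
      psi_sharp A a' b' * psi_sharp B (k + int j - a') (m + int j - b') * mult_weight b' (k + int j - a') j)"
    by (rule psi_mult_Sum_any[OF psi_sharp_closed[OF A] psi_sharp_closed[OF B]])
  also have "\<dots> = Sum_any (\<lambda>x. Sum_any (G x))"
  proof (rule Sum_any.cong, clarify)
    fix a' b' j
    show "psi_sharp A a' b' * psi_sharp B (k + int j - a') (m + int j - b') * mult_weight b' (k + int j - a') j
      = Sum_any (G (a', b', j))"
      unfolding G_def prod.case by (rule psi_sharp_mult_psi_sharp[OF A B])
  qed
  also have "\<dots> = Sum_any (\<lambda>u. sum (F u) (case u of (a, b, n) \<Rightarrow> {(j, p). j + p \<le> n}))"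
  proof (rule Sum_any_nested_reindex_sum[where
        \<phi>="\<lambda>((a', b', j), (p, q)). ((b' + int p, a' + int p, j + p + q), (j, p))"])
    show "finite {u. \<exists>v \<in> (case u of (a, b, n) \<Rightarrow> {(j, p). j + p \<le> n}). F u v \<noteq> 0}"
      by (rule finite_subset[OF _ finite_product_support[OF A B, of m k]]) (auto simp: F_def)
    show "inj (\<lambda>((a'::int, b'::int, j), (p, q::nat)). ((b' + int p, a' + int p, j + p + q), (j, p)))"
      by (rule injI) auto
    show "(u, v) \<in> range (\<lambda>((a', b', j), (p, q)). ((b' + int p, a' + int p, j + p + q), (j, p)))"
      if "v \<in> (case u of (a, b, n) \<Rightarrow> {(j, p). j + p \<le> n})" for u :: "int \<times> int \<times> nat" and v
    proof -
      obtain a b n j p where uv: "u = (a, b, n)" "v = (j, p)" by (cases u, cases v)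
      with that show ?thesis
        by (auto intro!: image_eqI[where x="((b - int p, a - int p, j), (p, n - j - p))"])
    qed
  qed (auto simp: F_def G_def finite_pairs_sum_le algebra_simps)
  also have "\<dots> = Sum_any (\<lambda>(a, b, n).
      A a b * B (m + int n - a) (k + int n - b) * product_of_sharps_weight a b (m + int n - a) (k + int n - b) n)"
    by (simp add: F_def product_of_sharps_weight_def sum_distrib_left case_prod_beta)
  finally show ?thesis .
qed

lemma psi_sharp_mult:
  assumes "A \<in> PsiD" "B \<in> PsiD"
  shows "psi_sharp (psi_mult A B) = psi_mult (psi_sharp A) (psi_sharp B)"
  by (intro ext) (simp only: psi_sharp_mult_Sum_any[OF assms] psi_mult_sharp_sharp_Sum_any[OF assms]
      sharp_of_product_weight_eq)

lemma psi_sharp_sharp: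
  assumes C: "C \<in> PsiD"
  shows "psi_sharp (psi_sharp C) k m = neg_one_pow (k + m) * C k m"
proof -
  define F where "F n p = C (k + int n) (m + int n)
    * (dagger_weight (k + int n) (m + int n) p * dagger_weight (m + int n - int p) (k + int n - int p) (n - p))"
    for n p :: nat
  have "psi_sharp (psi_sharp C) k m
      = Sum_any (\<lambda>i. psi_sharp C (m + int i) (k + int i) * dagger_weight (m + int i) (k + int i) i)"
    by (rule psi_sharp_Sum_any[OF psi_sharp_closed[OF C]])
  also have "\<dots> = Sum_any (\<lambda>i. Sum_any (\<lambda>p. C (k + int i + int p) (m + int i + int p)
      * dagger_weight (k + int i + int p) (m + int i + int p) p * dagger_weight (m + int i) (k + int i) i))"
    unfolding psi_sharp_Sum_any[OF C]
    by (intro Sum_any.cong Sum_any_left_distrib finite_subset[OF _ finite_diagonal_support[OF C]]) auto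
  also have "\<dots> = Sum_any (\<lambda>n. sum (F n) {..n})"
  proof (rule Sum_any_nested_reindex_sum[where \<phi>="\<lambda>(i, p). (i + p, p)"])
    show "finite {n. \<exists>p\<in>{..n}. F n p \<noteq> 0}"
      by (rule finite_subset[OF _ finite_diagonal_support[OF C, of k m]]) (auto simp: F_def)
    show "inj (\<lambda>(i::nat, p::nat). (i + p, p))"
      by (rule injI) auto
    show "(n, p) \<in> range (\<lambda>(i, p). (i + p, p))" if "p \<in> {..n}" for n p :: nat
      using that by (auto intro!: image_eqI[where x="(n - p, p)"])
  qed (auto simp: F_def algebra_simps)
  also have "\<dots> = Sum_any (\<lambda>n::nat. if n = 0 then neg_one_pow (k + m) * C k m else 0)"
    unfolding F_def sum_distrib_left[symmetric] dagger_weight_involution by (intro Sum_any.cong) simp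
  also have "\<dots> = neg_one_pow (k + m) * C k m"
    by simp
  finally show ?thesis .
qed

lemma psi_sharp_order_four:
  assumes "C \<in> PsiD"
  shows "(psi_sharp ^^ 4) C = C"
proof (intro ext)
  fix k m
  have "(psi_sharp ^^ 4) C k m = psi_sharp (psi_sharp (psi_sharp (psi_sharp C))) k m"
    by (simp add: numeral_eq_Suc)
  also have "\<dots> = neg_one_pow (k + m) * (neg_one_pow (k + m) * C k m)"
    using assms by (simp add: psi_sharp_sharp psi_sharp_closed)
  also have "\<dots> = C k m"
    by (simp add: mult.assoc[symmetric] neg_one_pow_mult_self)
  finally show "(psi_sharp ^^ 4) C k m = C k m" .
qed

lemma bij_betw_psi_sharp: "bij_betw psi_sharp PsiD PsiD"
proof (rule bij_betw_byWitness[where f'="psi_sharp ^^ 3"])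
  have closed: "(psi_sharp ^^ n) C \<in> PsiD" if "C \<in> PsiD" for n C
    using that by (induction n) (simp_all add: psi_sharp_closed)
  show "\<forall>C\<in>PsiD. (psi_sharp ^^ 3) (psi_sharp C) = C" "\<forall>C\<in>PsiD. psi_sharp ((psi_sharp ^^ 3) C) = C"
    using psi_sharp_order_four by (simp_all add: numeral_eq_Suc funpow_swap1)
  show "psi_sharp ` PsiD \<subseteq> PsiD" "(psi_sharp ^^ 3) ` PsiD \<subseteq> PsiD"
    using closed[of _ 1] closed[of _ 3] by auto
qed

lemma psi_sharp_moves_x:
  obtains D where "D \<in> PsiD" "psi_sharp D \<noteq> D" "psi_sharp (psi_sharp D) \<noteq> D"
proof
  let ?x = "\<lambda>k m::int. if k = 1 \<and> m = 0 then 1 else 0 :: complex"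
  show x: "?x \<in> PsiD"
    by (rule PsiD_boundedI[of _ 1 0]) (simp split: if_splits)
  have "psi_sharp ?x 1 0 = 0"
    by (simp add: psi_sharp_Sum_any[OF x])
  then show "psi_sharp ?x \<noteq> ?x"
    by (auto dest: arg_cong[where f="\<lambda>D. D 1 0"])
  have "psi_sharp (psi_sharp ?x) 1 0 = -1"
    by (simp add: psi_sharp_sharp[OF x] neg_one_pow_def)
  then show "psi_sharp (psi_sharp ?x) \<noteq> ?x"
    by (auto dest: arg_cong[where f="\<lambda>D. D 1 0"])
qed

lemma psi_sharp_funpow_not_identity:
  assumes "n \<in> {1, 2, 3}"
  shows "\<exists>D\<in>PsiD. (psi_sharp ^^ n) D \<noteq> D"
proof -
  obtain D where D: "D \<in> PsiD" "psi_sharp D \<noteq> D" "psi_sharp (psi_sharp D) \<noteq> D"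
    by (rule psi_sharp_moves_x)
  have "(psi_sharp ^^ 3) D \<noteq> D"
  proof
    assume "(psi_sharp ^^ 3) D = D"
    then have "(psi_sharp ^^ 4) D = psi_sharp D"
      by (simp add: numeral_eq_Suc)
    with D show False
      using psi_sharp_order_four by simp
  qed
  with assms D show ?thesis
    by (auto simp: numeral_eq_Suc)
qed

theorem lemma2p4:
  shows "bij_betw psi_sharp PsiD PsiD
    \<and> (\<forall>A\<in>PsiD. \<forall>B\<in>PsiD. psi_sharp (psi_add A B) = psi_add (psi_sharp A) (psi_sharp B))
    \<and> (\<forall>c. \<forall>A\<in>PsiD. psi_sharp (psi_smult c A) = psi_smult c (psi_sharp A))
    \<and> (\<forall>A\<in>PsiD. \<forall>B\<in>PsiD. psi_sharp (psi_mult A B) = psi_mult (psi_sharp A) (psi_sharp B))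
    \<and> psi_sharp psi_one = psi_one
    \<and> (\<forall>D\<in>PsiD. (psi_sharp ^^ 4) D = D)
    \<and> (\<forall>n\<in>{1,2,3::nat}. \<exists>D\<in>PsiD. (psi_sharp ^^ n) D \<noteq> D)"
proof (intro conjI ballI allI)
  fix A B assume "A \<in> PsiD" "B \<in> PsiD"
  then show "psi_sharp (psi_add A B) = psi_add (psi_sharp A) (psi_sharp B)"
    and "psi_sharp (psi_mult A B) = psi_mult (psi_sharp A) (psi_sharp B)"
    by (rule psi_sharp_add, rule psi_sharp_mult)
next
  fix c A assume "A \<in> PsiD"
  then show "psi_sharp (psi_smult c A) = psi_smult c (psi_sharp A)"
    by (rule psi_sharp_smult)
qed (simp_all add: bij_betw_psi_sharp psi_sharp_one psi_sharp_order_four psi_sharp_funpow_not_identity)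

end
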